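(* Let $G\curvearrowright X$ and $H\curvearrowright Y$ be group actions with $\mathrm{Con}(G\curvearrowright X)=\mathrm{Con}(H\curvearrowright Y)$. Then: (1) $X$ is finite (resp. infinite) if and only if $Y$ is finite (resp. infinite); (2) for every $n$, $|X|=n$ if and only if $|Y|=n$; (3) for every $n$, $|X|\ge n$ if and only if $|Y|\ge n$.
   Context: For an action $G\curvearrowright X$, an ordered tuple $\mathfrak{g}=(g_1,\dots,g_n)$ of elements of $G$ and a finite partition $\mathcal{E}=\{E_1,\dots,E_m\}$ of $X$ (a configuration pair), a configuration is a tuple $C=(C_0,\dots,C_n)\in\{1,\dots,m\}^{n+1}$ such that some $x\in E_{C_0}$ satisfies $g_i\cdot x\in E_{C_i}$ for $i=1,\dots,n$; the set of these is $\mathrm{Con}(\mathfrak{g},\mathcal{E};X)$. Then $\mathrm{Con}(G\curvearrowright X)=\{\mathrm{Con}(\mathfrak{g},\mathcal{E};X): (\mathfrak{g},\mathcal{E})\text{ a configuration pair}\}$. *)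

theory Defs
  imports "HOL-Algebra.Group_Action"
begin

text \<open>A finite partition of X, as an ordered list of blocks E_1,...,E_m
  (block E_i is Es ! (i - 1)): blocks are nonempty, pairwise disjoint and cover X.\<close>
definition is_partition :: "'x set \<Rightarrow> 'x set list \<Rightarrow> bool" where
  "is_partition X Es \<longleftrightarrow>
     (\<forall>i < length Es. Es ! i \<noteq> {}) \<and>
     (\<forall>i < length Es. \<forall>j < length Es. i \<noteq> j \<longrightarrow> Es ! i \<inter> Es ! j = {}) \<and>
     \<Union> (set Es) = X"

definition config_pair :: "('g, 'm) monoid_scheme \<Rightarrow> 'x set \<Rightarrow> 'g list \<Rightarrow> 'x set list \<Rightarrow> bool" where
  "config_pair G X gs Es \<longleftrightarrow> gs \<noteq> [] \<and> set gs \<subseteq> carrier G \<and> is_partition X Es"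

definition Con_pair :: "('g \<Rightarrow> 'x \<Rightarrow> 'x) \<Rightarrow> 'g list \<Rightarrow> 'x set list \<Rightarrow> nat list set" where
  "Con_pair \<phi> gs Es =
     {C. length C = length gs + 1 \<and> (\<forall>k < length C. 1 \<le> C ! k \<and> C ! k \<le> length Es) \<and>
         (\<exists>x \<in> Es ! (C ! 0 - 1).
            \<forall>i \<in> {1..length gs}. \<phi> (gs ! (i - 1)) x \<in> Es ! (C ! i - 1))}"

definition Con_action :: "('g, 'm) monoid_scheme \<Rightarrow> 'x set \<Rightarrow> ('g \<Rightarrow> 'x \<Rightarrow> 'x) \<Rightarrow> nat list set set" where
  "Con_action G X \<phi> = {Con_pair \<phi> gs Es | gs Es. config_pair G X gs Es}"

end

theory Submission
  imports Defs "HOL-Library.Disjoint_Sets"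
begin

text \<open>Every block of a configuration partition is nonempty, so the first entries of the
  configurations in \<open>Con(g, E; X)\<close> are exactly \<open>1, \<dots>, m\<close>, where \<open>m\<close> is the number of blocks.
  Hence \<open>Con(G \<curvearrowright> X)\<close> knows for which \<open>m \<ge> 1\<close> the set \<open>X\<close> can be split into \<open>m\<close> nonempty
  blocks, and these are precisely the \<open>m\<close> with \<open>m \<le> |X|\<close>. Knowing all lower bounds for \<open>|X|\<close>
  determines both finiteness and cardinality.\<close>

lemma is_partition_iff_partition_on:
  "is_partition X Es \<longleftrightarrow> distinct Es \<and> partition_on X (set Es)"
proof
  assume part: "is_partition X Es"
  have "Es ! i \<noteq> Es ! j" if "i < length Es" "j < length Es" "i \<noteq> j" for i j
    using part that unfolding is_partition_def by fastforce
  then have "distinct Es"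
    by (auto simp: distinct_conv_nth)
  moreover have "partition_on X (set Es)"
    using part unfolding is_partition_def
    by (intro partition_onI) (auto simp: in_set_conv_nth disjnt_def)
  ultimately show "distinct Es \<and> partition_on X (set Es)" ..
next
  assume "distinct Es \<and> partition_on X (set Es)"
  then show "is_partition X Es"
    unfolding is_partition_def partition_on_def
    by (auto simp: nth_eq_iff_index_eq disjoint_def dest: nth_mem)
qed

lemma card_le_card_if_partition_on:
  assumes "finite A" and P: "partition_on A P"
  shows "card P \<le> card A"
proof -
  have blocks_finite: "\<And>p. p \<in> P \<Longrightarrow> finite p"
    using assms partition_onD1 by (metis Union_upper finite_subset)
  have "card P = (\<Sum>p\<in>P. 1)"
    by simp
  also have "\<dots> \<le> (\<Sum>p\<in>P. card p)"
    using blocks_finite partition_onD3[OF P]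
    by (intro sum_mono) (metis Suc_leI card_gt_0_iff One_nat_def)
  also have "\<dots> = card A"
    using product_partition[OF P blocks_finite] by simp
  finally show ?thesis .
qed

lemma exists_partition_on_card:
  assumes "1 \<le> m" and "infinite A \<or> m \<le> card A"
  obtains P where "partition_on A P" and "finite P" and "card P = m"
proof -
  obtain T where T: "T \<subseteq> A" "finite T" "card T = m"
    using assms(2) by (meson infinite_arbitrarily_large obtain_subset_with_card_n)
  then obtain x where "x \<in> T"
    using assms(1) by fastforce
  define S where "S = T - {x}"
  have "S \<subseteq> A" "finite S" "x \<in> A - S" "card S = m - 1"
    using T \<open>x \<in> T\<close> unfolding S_def by auto
  define P where "P = insert (A - S) ((\<lambda>y. {y}) ` S)"
  have "partition_on A P"
    unfolding P_def using \<open>S \<subseteq> A\<close> \<open>x \<in> A - S\<close>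
    by (subst partition_on_insert)
      (auto simp: disjnt_def Diff_Diff_Int Int_absorb1 partition_on_singletons)
  moreover have "A - S \<notin> (\<lambda>y. {y}) ` S"
    using \<open>x \<in> A - S\<close> by auto
  then have "card P = m"
    unfolding P_def using \<open>finite S\<close> \<open>card S = m - 1\<close> assms(1)
    by (simp add: card_image)
  ultimately show ?thesis
    using that \<open>finite S\<close> unfolding P_def by simp
qed

lemma exists_partition_of_length_iff:
  assumes "1 \<le> m"
  shows "(\<exists>Es. is_partition X Es \<and> length Es = m) \<longleftrightarrow> infinite X \<or> m \<le> card X"
proof
  assume "\<exists>Es. is_partition X Es \<and> length Es = m"
  then obtain Es where "distinct Es" "partition_on X (set Es)" "length Es = m"
    by (auto simp: is_partition_iff_partition_on)
  then show "infinite X \<or> m \<le> card X"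
    using card_le_card_if_partition_on distinct_card by metis
next
  assume "infinite X \<or> m \<le> card X"
  then obtain P where "partition_on X P" "finite P" "card P = m"
    using exists_partition_on_card assms by blast
  moreover obtain Es where "set Es = P" "distinct Es"
    using finite_distinct_list[OF \<open>finite P\<close>] by blast
  ultimately show "\<exists>Es. is_partition X Es \<and> length Es = m"
    by (metis is_partition_iff_partition_on distinct_card)
qed

lemma Con_pair_first_entries:
  assumes part: "is_partition X Es"
    and maps_to: "\<And>g x. g \<in> set gs \<Longrightarrow> x \<in> X \<Longrightarrow> \<phi> g x \<in> X"
  shows "(\<lambda>C. C ! 0) ` Con_pair \<phi> gs Es = {1..length Es}"
proof
  show "(\<lambda>C. C ! 0) ` Con_pair \<phi> gs Es \<subseteq> {1..length Es}"
  proof (rule image_subsetI)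
    fix C assume "C \<in> Con_pair \<phi> gs Es"
    then have "0 < length C" "\<forall>k<length C. 1 \<le> C ! k \<and> C ! k \<le> length Es"
      unfolding Con_pair_def by simp_all
    then show "C ! 0 \<in> {1..length Es}"
      by simp
  qed
next
  show "{1..length Es} \<subseteq> (\<lambda>C. C ! 0) ` Con_pair \<phi> gs Es"
  proof
    fix j assume j: "j \<in> {1..length Es}"
    have "\<forall>y\<in>X. \<exists>k. k < length Es \<and> y \<in> Es ! k"
      using part unfolding is_partition_def by (metis UnionE in_set_conv_nth)
    then obtain block where block: "\<And>y. y \<in> X \<Longrightarrow> block y < length Es \<and> y \<in> Es ! block y"
      by metis
    have "Es ! (j - 1) \<noteq> {}" "Es ! (j - 1) \<in> set Es"
      using part j unfolding is_partition_def by auto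
    then obtain x where x: "x \<in> Es ! (j - 1)" "x \<in> X"
      using part unfolding is_partition_def by blast
    have block_image:
      "block (\<phi> (gs ! i) x) < length Es \<and> \<phi> (gs ! i) x \<in> Es ! block (\<phi> (gs ! i) x)"
      if "i < length gs" for i
      using block maps_to nth_mem that x(2) by blast
    define C where "C = j # map (\<lambda>g. Suc (block (\<phi> g x))) gs"
    have "\<forall>k<length C. 1 \<le> C ! k \<and> C ! k \<le> length Es"
    proof (intro allI impI)
      fix k assume "k < length C"
      then show "1 \<le> C ! k \<and> C ! k \<le> length Es"
        using j block_image unfolding C_def by (cases k) (auto simp: Suc_le_eq)
    qed
    moreover have "\<forall>i\<in>{1..length gs}. \<phi> (gs ! (i - 1)) x \<in> Es ! (C ! i - 1)"
    proof
      fix i assume "i \<in> {1..length gs}"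
      then show "\<phi> (gs ! (i - 1)) x \<in> Es ! (C ! i - 1)"
        using block_image unfolding C_def by (cases i) auto
    qed
    moreover have "length C = length gs + 1" "x \<in> Es ! (C ! 0 - 1)"
      using x unfolding C_def by simp_all
    ultimately have "C \<in> Con_pair \<phi> gs Es"
      unfolding Con_pair_def by blast
    then show "j \<in> (\<lambda>C. C ! 0) ` Con_pair \<phi> gs Es"
      by (rule rev_image_eqI) (simp add: C_def)
  qed
qed

lemma exists_partition_of_length_iff_Con_action:
  assumes "group_action G X \<phi>"
  shows "(\<exists>Es. is_partition X Es \<and> length Es = m) \<longleftrightarrow>
         (\<exists>S\<in>Con_action G X \<phi>. (\<lambda>C. C ! 0) ` S = {1..m})"
proof
  assume "\<exists>Es. is_partition X Es \<and> length Es = m"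
  then obtain Es where part: "is_partition X Es" and "length Es = m"
    by blast
  have "\<one>\<^bsub>G\<^esub> \<in> carrier G"
    using assms by (simp add: group_action_def group_hom_def group.is_monoid)
  then have "config_pair G X [\<one>\<^bsub>G\<^esub>] Es"
    using part unfolding config_pair_def by simp
  moreover have "(\<lambda>C. C ! 0) ` Con_pair \<phi> [\<one>\<^bsub>G\<^esub>] Es = {1..m}"
    unfolding \<open>length Es = m\<close>[symmetric]
    using \<open>\<one>\<^bsub>G\<^esub> \<in> carrier G\<close> group_action.element_image[OF assms]
    by (intro Con_pair_first_entries[OF part]) auto
  ultimately show "\<exists>S\<in>Con_action G X \<phi>. (\<lambda>C. C ! 0) ` S = {1..m}"
    unfolding Con_action_def by blast
next
  assume "\<exists>S\<in>Con_action G X \<phi>. (\<lambda>C. C ! 0) ` S = {1..m}"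
  then obtain gs Es where cp: "config_pair G X gs Es"
    and first: "(\<lambda>C. C ! 0) ` Con_pair \<phi> gs Es = {1..m}"
    unfolding Con_action_def by blast
  have part: "is_partition X Es"
    using cp unfolding config_pair_def by simp
  have "(\<lambda>C. C ! 0) ` Con_pair \<phi> gs Es = {1..length Es}"
    using cp group_action.element_image[OF assms] unfolding config_pair_def
    by (intro Con_pair_first_entries[OF part]) auto
  then have "{1..length Es} = {1..m}"
    using first by metis
  then have "length Es = m"
    by (simp add: Icc_eq_Icc, linarith)
  with part show "\<exists>Es. is_partition X Es \<and> length Es = m"
    by blast
qed

lemma card_lower_bounds_eq_if_Con_action_eq:
  assumes "group_action G X \<phi>" and "group_action H Y \<psi>"
    and "Con_action G X \<phi> = Con_action H Y \<psi>"
  shows "(infinite X \<or> m \<le> card X) \<longleftrightarrow> (infinite Y \<or> m \<le> card Y)"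
proof (cases "m = 0")
  case False
  then have "1 \<le> m"
    by simp
  show ?thesis
    by (simp only: exists_partition_of_length_iff[OF \<open>1 \<le> m\<close>, symmetric] assms(3)
        exists_partition_of_length_iff_Con_action[OF assms(1)]
        exists_partition_of_length_iff_Con_action[OF assms(2)])
qed simp

lemma finite_eq_and_card_eq_if_card_lower_bounds_eq:
  assumes "\<And>m. (infinite A \<or> m \<le> card A) \<longleftrightarrow> (infinite B \<or> m \<le> card B)"
  shows "(finite A \<longleftrightarrow> finite B) \<and> card A = card B"
  using assms[of "Suc (card A)"] assms[of "Suc (card B)"] assms[of "card A"] assms[of "card B"]
  by (cases "finite A"; cases "finite B") auto

theorem mainTheorem2:
  fixes G :: "('g, 'm) monoid_scheme" and X :: "'x set" and \<phi> :: "'g \<Rightarrow> 'x \<Rightarrow> 'x"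
    and H :: "('h, 'n) monoid_scheme" and Y :: "'y set" and \<psi> :: "'h \<Rightarrow> 'y \<Rightarrow> 'y"
  assumes "group_action G X \<phi>" and "group_action H Y \<psi>"
    and "Con_action G X \<phi> = Con_action H Y \<psi>"
  shows "(finite X \<longleftrightarrow> finite Y) \<and> (infinite X \<longleftrightarrow> infinite Y) \<and>
         (\<forall>n::nat. (finite X \<and> card X = n) \<longleftrightarrow> (finite Y \<and> card Y = n)) \<and>
         (\<forall>n::nat. (infinite X \<or> n \<le> card X) \<longleftrightarrow> (infinite Y \<or> n \<le> card Y))"
proof -
  have bounds: "\<And>n. (infinite X \<or> n \<le> card X) \<longleftrightarrow> (infinite Y \<or> n \<le> card Y)"
    using card_lower_bounds_eq_if_Con_action_eq[OF assms] .
  then have "(finite X \<longleftrightarrow> finite Y) \<and> card X = card Y"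
    by (rule finite_eq_and_card_eq_if_card_lower_bounds_eq)
  with bounds show ?thesis
    by auto
qed

end
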